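(* Let $\mathcal{C}_1$ and $\mathcal{C}_2$ be two Wilf-equivalent permutation classes with $p$-bases $\mathcal{B}_1$ and $\mathcal{B}_2$ respectively. For $i\in\{1,2\}$ and $x\in\{top,bottom,right,left\}$ let $\mathcal{M}_{i,x}=\{M_{\tau,x}:\tau\in\mathcal{B}_i\}$. Then the eight permutation classes $Av_{\mathfrak{S}}(\mathcal{M}_{i,x})$, $i\in\{1,2\}$, $x\in\{top,bottom,right,left\}$, are all Wilf-equivalent.
   Context: A permutation $\sigma$ of $\{1,\dots,n\}$ is identified with its permutation matrix ($M_\sigma(i,j)=1$ iff $i=\sigma(j)$, rows numbered bottom to top). A matrix is a submatrix of another if obtained by deleting rows and/or columns; the pattern order on permutations is this order restricted to permutation matrices, and a permutation class is a set closed downward for it. The $p$-basis of a class $\mathcal{C}$ is the set of permutations not in $\mathcal{C}$ that are minimal for the pattern order among those not in $\mathcal{C}$. Two permutation classes are Wilf-equivalent if for every $n$ they contain the same number of permutations of size $n$. For a permutation $\tau$, $M_{\tau,top}$ (resp. $M_{\tau,bottom}$) is the matrix obtained by adding a row of $0$'s above (resp. below) the permutation matrix of $\tau$, and $M_{\tau,right}$ (resp. $M_{\tau,left}$) by adding a column of $0$'s to its right (resp. left). $Av_{\mathfrak{S}}(\mathcal{M})$ is the set of permutations with no submatrix in $\mathcal{M}$. *)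

theory Defs
  imports Main
begin

text \<open>A permutation sigma of {1..n} is represented by the list [sigma(1),...,sigma(n)].\<close>
definition is_perm :: "nat list \<Rightarrow> bool" where
  "is_perm s \<longleftrightarrow> distinct s \<and> set s = {1..length s}"

text \<open>A 0/1 matrix: (number of rows, number of columns, entries).
  Rows and columns are indexed from 0; row 0 is the bottom row, column 0 the leftmost.
  Only entries with row < number of rows and column < number of columns are meaningful.\<close>
type_synonym bmat = "nat \<times> nat \<times> (nat \<Rightarrow> nat \<Rightarrow> bool)"

definition nrows :: "bmat \<Rightarrow> nat" where "nrows M = fst M"
definition ncols :: "bmat \<Rightarrow> nat" where "ncols M = fst (snd M)"
definition entry :: "bmat \<Rightarrow> nat \<Rightarrow> nat \<Rightarrow> bool" where "entry M = snd (snd M)"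

text \<open>Permutation matrix: M(i,j) = 1 iff i = sigma(j) (1-indexed), i.e. row i (0-indexed, from
  the bottom) and column j (0-indexed) carry a 1 iff i + 1 = sigma(j + 1).\<close>
definition perm_mat :: "nat list \<Rightarrow> bmat" where
  "perm_mat s = (length s, length s, (\<lambda>i j. i + 1 = s ! j))"

definition submatrix :: "bmat \<Rightarrow> bmat \<Rightarrow> bool" where
  "submatrix A B \<longleftrightarrow>
     (\<exists>r c. strict_mono_on {..<nrows A} r \<and> strict_mono_on {..<ncols A} c \<and>
            r ` {..<nrows A} \<subseteq> {..<nrows B} \<and> c ` {..<ncols A} \<subseteq> {..<ncols B} \<and>
            (\<forall>i<nrows A. \<forall>j<ncols A. entry A i j = entry B (r i) (c j)))"

definition pattern :: "nat list \<Rightarrow> nat list \<Rightarrow> bool" where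
  "pattern p s \<longleftrightarrow> is_perm p \<and> is_perm s \<and> submatrix (perm_mat p) (perm_mat s)"

definition perm_class :: "nat list set \<Rightarrow> bool" where
  "perm_class C \<longleftrightarrow> (\<forall>s\<in>C. is_perm s) \<and> (\<forall>s\<in>C. \<forall>p. pattern p s \<longrightarrow> p \<in> C)"

definition p_basis :: "nat list set \<Rightarrow> nat list set" where
  "p_basis C = {s. is_perm s \<and> s \<notin> C \<and> (\<forall>p. pattern p s \<and> p \<noteq> s \<longrightarrow> p \<in> C)}"

definition wilf_equiv :: "nat list set \<Rightarrow> nat list set \<Rightarrow> bool" where
  "wilf_equiv C D \<longleftrightarrow> (\<forall>n. card {s\<in>C. length s = n} = card {s\<in>D. length s = n})"

datatype side = Top | Bottom | Right | Left

text \<open>M_{tau,x}: add a zero row above/below or a zero column right/left of the permutation matrix.\<close>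
fun ext_mat :: "nat list \<Rightarrow> side \<Rightarrow> bmat" where
  "ext_mat t Top = (length t + 1, length t, (\<lambda>i j. i < length t \<and> entry (perm_mat t) i j))"
| "ext_mat t Bottom = (length t + 1, length t, (\<lambda>i j. 0 < i \<and> entry (perm_mat t) (i - 1) j))"
| "ext_mat t Right = (length t, length t + 1, (\<lambda>i j. j < length t \<and> entry (perm_mat t) i j))"
| "ext_mat t Left = (length t, length t + 1, (\<lambda>i j. 0 < j \<and> entry (perm_mat t) i (j - 1)))"

definition Av_mat :: "bmat set \<Rightarrow> nat list set" where
  "Av_mat Ms = {s. is_perm s \<and> (\<forall>M\<in>Ms. \<not> submatrix M (perm_mat s))}"

definition ext_set :: "nat list set \<Rightarrow> side \<Rightarrow> bmat set" where
  "ext_set B x = (\<lambda>t. ext_mat t x) ` B"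

end

theory Submission
  imports Defs
begin

text \<open>A permutation \<open>s\<close> of size \<open>n + 1\<close> contains the matrix of \<open>\<tau>\<close> padded by a zero row on
  top iff \<open>\<tau>\<close> occurs in \<open>s\<close> without using the top row of \<open>s\<close>, i.e. iff \<open>\<tau>\<close> is a pattern of
  \<open>s\<close> with its topmost point deleted; likewise for the other three sides. Hence \<open>s\<close> avoids
  the padded basis of a class \<open>C\<close> iff deleting the point of \<open>s\<close> on side \<open>x\<close> leaves a
  permutation of \<open>C\<close>. As that point can be reinserted at any of the \<open>n + 1\<close> cells of side
  \<open>x\<close>, the padded class has \<open>(n + 1) \<cdot> |C\<^sub>n|\<close> permutations of size \<open>n + 1\<close>, a number
  depending only on the enumeration of \<open>C\<close>.\<close>

section \<open>Occurrences of patterns\<close>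

definition pattern_embedding :: "nat list \<Rightarrow> nat list \<Rightarrow> (nat \<Rightarrow> nat) \<Rightarrow> (nat \<Rightarrow> nat) \<Rightarrow> bool" where
  "pattern_embedding t s r c \<longleftrightarrow>
     strict_mono_on {..<length t} r \<and> strict_mono_on {..<length t} c \<and>
     r ` {..<length t} \<subseteq> {..<length s} \<and> c ` {..<length t} \<subseteq> {..<length s} \<and>
     (\<forall>i<length t. \<forall>j<length t. (i + 1 = t ! j) \<longleftrightarrow> (r i + 1 = s ! c j))"

lemma pattern_iff_embedding:
  "pattern t s \<longleftrightarrow> is_perm t \<and> is_perm s \<and> (\<exists>r c. pattern_embedding t s r c)"
  unfolding pattern_def submatrix_def pattern_embedding_def perm_mat_def nrows_def ncols_def entry_def
  by simp

lemma pattern_embedding_entries: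
  "pattern_embedding t s r c \<Longrightarrow> i < length t \<Longrightarrow> j < length t \<Longrightarrow>
    (i + 1 = t ! j) \<longleftrightarrow> (r i + 1 = s ! c j)"
  by (simp add: pattern_embedding_def)

lemma pattern_embedding_bounds:
  "pattern_embedding t s r c \<Longrightarrow> i < length t \<Longrightarrow> r i < length s \<and> c i < length s"
  by (auto simp: pattern_embedding_def)

lemma is_perm_nth_bounds: "is_perm s \<Longrightarrow> j < length s \<Longrightarrow> 1 \<le> s ! j \<and> s ! j \<le> length s"
  unfolding is_perm_def by (metis atLeastAtMost_iff nth_mem)

lemma is_perm_value_index:
  assumes "is_perm s" and "i < length s"
  obtains j where "j < length s" and "s ! j = i + 1"
proof -
  have "i + 1 \<in> set s" using assms unfolding is_perm_def by auto
  then obtain j where "j < length s" "s ! j = i + 1" by (auto simp: in_set_conv_nth)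
  then show thesis by (rule that)
qed

lemma is_perm_nth_eq_iff:
  "is_perm s \<Longrightarrow> i < length s \<Longrightarrow> j < length s \<Longrightarrow> s ! i = s ! j \<longleftrightarrow> i = j"
  unfolding is_perm_def by (simp add: nth_eq_iff_index_eq)

lemma is_permI:
  assumes "distinct s" and "\<And>j. j < length s \<Longrightarrow> 1 \<le> s ! j \<and> s ! j \<le> length s"
  shows "is_perm s"
proof -
  have sub: "set s \<subseteq> {1..length s}" using assms(2) by (auto simp: in_set_conv_nth)
  have "card (set s) = card {1..length s}" using assms(1) by (simp add: distinct_card)
  then have "set s = {1..length s}" using card_subset_eq[OF _ sub] by simp
  then show ?thesis using assms(1) unfolding is_perm_def by simp
qed

lemma pattern_embedding_nth:
  assumes "pattern_embedding t s r c" and "is_perm t" and "j < length t"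
  shows "s ! c j = r (t ! j - 1) + 1"
proof -
  have "t ! j - 1 < length t" and "t ! j - 1 + 1 = t ! j"
    using is_perm_nth_bounds[OF assms(2,3)] by auto
  then show ?thesis using assms(1,3) unfolding pattern_embedding_def by metis
qed

lemma pattern_embedding_avoids_column_iff_row:
  assumes e: "pattern_embedding t s r c" and pt: "is_perm t" and ps: "is_perm s"
    and a: "a < length s" and sa: "s ! a = b + 1"
  shows "a \<notin> c ` {..<length t} \<longleftrightarrow> b \<notin> r ` {..<length t}"
proof
  assume "a \<notin> c ` {..<length t}"
  show "b \<notin> r ` {..<length t}"
  proof
    assume "b \<in> r ` {..<length t}"
    then obtain i where i: "i < length t" "r i = b" by auto
    obtain j where j: "j < length t" "t ! j = i + 1" using is_perm_value_index[OF pt i(1)] .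
    have "s ! c j = s ! a"
      using pattern_embedding_entries[OF e i(1) j(1)] i(2) j(2) sa by simp
    moreover have "c j < length s" using pattern_embedding_bounds[OF e j(1)] by simp
    ultimately have "c j = a" using is_perm_nth_eq_iff[OF ps _ a] by blast
    then show False using \<open>a \<notin> c ` {..<length t}\<close> j(1) by auto
  qed
next
  assume "b \<notin> r ` {..<length t}"
  show "a \<notin> c ` {..<length t}"
  proof
    assume "a \<in> c ` {..<length t}"
    then obtain j where j: "j < length t" "c j = a" by auto
    have "r (t ! j - 1) = b" using pattern_embedding_nth[OF e pt j(1)] sa j(2) by simp
    moreover have "t ! j - 1 < length t" using is_perm_nth_bounds[OF pt j(1)] by auto
    ultimately show False using \<open>b \<notin> r ` {..<length t}\<close> by auto
  qed
qed

lemma pattern_embedding_comp: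
  assumes e1: "pattern_embedding t s r c" and e2: "pattern_embedding s u r' c'"
  shows "pattern_embedding t u (r' \<circ> r) (c' \<circ> c)"
  unfolding pattern_embedding_def
proof (intro conjI allI impI)
  fix i j assume "i < length t" "j < length t"
  then show "(i + 1 = t ! j) \<longleftrightarrow> ((r' \<circ> r) i + 1 = u ! (c' \<circ> c) j)"
    using pattern_embedding_entries[OF e1] pattern_embedding_entries[OF e2]
      pattern_embedding_bounds[OF e1] by simp
next
  show "strict_mono_on {..<length t} (r' \<circ> r)" "strict_mono_on {..<length t} (c' \<circ> c)"
    using e1 e2 pattern_embedding_bounds[OF e1]
    unfolding pattern_embedding_def strict_mono_on_def by auto
  show "(r' \<circ> r) ` {..<length t} \<subseteq> {..<length u}" "(c' \<circ> c) ` {..<length t} \<subseteq> {..<length u}"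
    using pattern_embedding_bounds[OF e1] pattern_embedding_bounds[OF e2] by auto
qed

lemma pattern_refl:
  assumes "is_perm s"
  shows "pattern s s"
proof -
  have "pattern_embedding s s id id" unfolding pattern_embedding_def by (simp add: strict_mono_on_def)
  then show ?thesis using assms unfolding pattern_iff_embedding by blast
qed

lemma pattern_trans:
  assumes "pattern t s" and "pattern s u"
  shows "pattern t u"
proof -
  obtain r c r' c' where "pattern_embedding t s r c" "pattern_embedding s u r' c'"
    using assms unfolding pattern_iff_embedding by blast
  then have "pattern_embedding t u (r' \<circ> r) (c' \<circ> c)" by (rule pattern_embedding_comp)
  then show ?thesis using assms unfolding pattern_iff_embedding by blast
qed

lemma strict_mono_on_lessThan_ge:
  "strict_mono_on {..<k} (c :: nat \<Rightarrow> nat) \<Longrightarrow> j < k \<Longrightarrow> j \<le> c j"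
proof (induction j)
  case (Suc j)
  then have "c j < c (Suc j)" by (auto simp: strict_mono_on_def)
  then show ?case using Suc by simp
qed simp

lemma strict_mono_on_lessThan_le:
  assumes mono: "strict_mono_on {..<k} (c :: nat \<Rightarrow> nat)" and im: "c ` {..<k} \<subseteq> {..<m}"
  shows "j < k \<Longrightarrow> c j + (k - j) \<le> m"
proof (induction "k - j" arbitrary: j)
  case (Suc d)
  show ?case
  proof (cases "Suc j < k")
    case True
    then have "c j < c (Suc j)" using mono by (auto simp: strict_mono_on_def)
    moreover have "d = k - Suc j" using Suc.hyps(2) by arith
    then have "c (Suc j) + (k - Suc j) \<le> m" using Suc.hyps(1) True by blast
    ultimately show ?thesis using True by linarith
  next
    case False
    then show ?thesis using im Suc(3) by force
  qed
qed simp

lemma pattern_length_le: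
  assumes "pattern t s"
  shows "length t \<le> length s"
proof (cases "length t")
  case (Suc k)
  obtain r c where "pattern_embedding t s r c" using assms unfolding pattern_iff_embedding by blast
  then show ?thesis
    using strict_mono_on_lessThan_le[of "length t" c "length s" 0] Suc
    unfolding pattern_embedding_def by simp
qed simp

lemma pattern_same_length_eq:
  assumes p: "pattern t s" and l: "length t = length s"
  shows "t = s"
proof -
  obtain r c where e: "pattern_embedding t s r c" and pt: "is_perm t"
    using p unfolding pattern_iff_embedding by blast
  have r_id: "r i = i" and c_id: "c i = i" if "i < length t" for i
  proof -
    have "i \<le> r i" "r i + (length t - i) \<le> length t" "i \<le> c i" "c i + (length t - i) \<le> length t"
      using e l that strict_mono_on_lessThan_ge strict_mono_on_lessThan_le
      unfolding pattern_embedding_def by auto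
    then show "r i = i" "c i = i" by auto
  qed
  show ?thesis
  proof (rule nth_equalityI)
    fix j assume j: "j < length t"
    then have "t ! j - 1 < length t" "1 \<le> t ! j" using is_perm_nth_bounds[OF pt j] by auto
    then show "t ! j = s ! j"
      using pattern_embedding_nth[OF e pt j] r_id c_id j by simp
  qed (fact l)
qed

lemma perm_class_mem_iff:
  assumes C: "perm_class C"
  shows "s \<in> C \<longleftrightarrow> is_perm s \<and> (\<forall>t\<in>p_basis C. \<not> pattern t s)"
proof
  assume "s \<in> C"
  then show "is_perm s \<and> (\<forall>t\<in>p_basis C. \<not> pattern t s)"
    using C unfolding perm_class_def p_basis_def by blast
next
  assume s: "is_perm s \<and> (\<forall>t\<in>p_basis C. \<not> pattern t s)"
  show "s \<in> C"
  proof (rule ccontr)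
    assume "s \<notin> C"
    define P where "P = {p. pattern p s \<and> p \<notin> C}"
    have "s \<in> P" using \<open>s \<notin> C\<close> s pattern_refl P_def by auto
    then obtain p where p: "p \<in> P" and p_min: "\<And>q. q \<in> P \<Longrightarrow> length p \<le> length q"
      using ex_has_least_nat[of "\<lambda>p. p \<in> P" s length] by blast
    have "q \<in> C" if q: "pattern q p" "q \<noteq> p" for q
    proof (rule ccontr)
      assume "q \<notin> C"
      then have "length p \<le> length q" using p q pattern_trans p_min unfolding P_def by blast
      then show False using q pattern_length_le pattern_same_length_eq by (metis le_antisym)
    qed
    then have "p \<in> p_basis C"
      using p unfolding P_def p_basis_def pattern_iff_embedding by auto
    then show False using s p unfolding P_def by blast
  qed
qed

section \<open>Deleting and inserting a point\<close>

text \<open>\<open>shift a\<close> enumerates \<open>UNIV - {a}\<close> in increasing order and \<open>unshift a\<close> is its inverse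
  on \<open>UNIV - {a}\<close>; they renumber the rows (columns) around a deleted or inserted row (column).\<close>
definition shift :: "nat \<Rightarrow> nat \<Rightarrow> nat" where
  "shift a j = (if j < a then j else Suc j)"

definition unshift :: "nat \<Rightarrow> nat \<Rightarrow> nat" where
  "unshift a p = (if p < a then p else p - 1)"

lemma shift_neq [simp]: "shift a j \<noteq> a" "a \<noteq> shift a j"
  unfolding shift_def by auto

lemma unshift_shift [simp]: "unshift a (shift a j) = j"
  unfolding shift_def unshift_def by auto

lemma shift_unshift: "p \<noteq> a \<Longrightarrow> shift a (unshift a p) = p"
  unfolding shift_def unshift_def by auto

lemma shift_less_iff [simp]: "shift a i < shift a j \<longleftrightarrow> i < j"
  unfolding shift_def by auto

lemma shift_eq_iff [simp]: "shift a i = shift a j \<longleftrightarrow> i = j"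
  unfolding shift_def by auto

lemma shift_less_Suc: "j < n \<Longrightarrow> shift a j < Suc n"
  unfolding shift_def by auto

lemma unshift_less: "p < Suc n \<Longrightarrow> p \<noteq> a \<Longrightarrow> a < Suc n \<Longrightarrow> unshift a p < n"
  unfolding unshift_def by auto

lemma unshift_less_iff: "i \<noteq> a \<Longrightarrow> j \<noteq> a \<Longrightarrow> unshift a i < unshift a j \<longleftrightarrow> i < j"
  unfolding unshift_def by auto

lemma unshift_eq_iff: "i \<noteq> a \<Longrightarrow> j \<noteq> a \<Longrightarrow> unshift a i = unshift a j \<longleftrightarrow> i = j"
  unfolding unshift_def by auto

lemma eq_unshift_iff: "v \<noteq> a \<Longrightarrow> x = unshift a v \<longleftrightarrow> shift a x = v"
  unfolding shift_def unshift_def by auto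

text \<open>Rows and columns are numbered from 0 while the values of \<open>s\<close> start at 1: the point of
  \<open>s\<close> in column \<open>a\<close> lies in row \<open>s ! a - 1\<close>.\<close>
fun delete_point :: "nat list \<Rightarrow> nat \<times> nat \<Rightarrow> nat list" where
  "delete_point s (a, b) = map (\<lambda>j. unshift b (s ! shift a j - 1) + 1) [0..<length s - 1]"

fun insert_point :: "nat list \<Rightarrow> nat \<times> nat \<Rightarrow> nat list" where
  "insert_point s (a, b) =
     map (\<lambda>p. if p = a then b + 1 else shift b (s ! unshift a p - 1) + 1) [0..<Suc (length s)]"

declare delete_point.simps [simp del] insert_point.simps [simp del]

lemma length_delete_point [simp]: "length (delete_point s p) = length s - 1"
  by (cases p) (simp add: delete_point.simps)

lemma nth_delete_point [simp]:
  "j < length s - 1 \<Longrightarrow> delete_point s (a, b) ! j = unshift b (s ! shift a j - 1) + 1"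
  by (simp add: delete_point.simps)

lemma length_insert_point [simp]: "length (insert_point s p) = Suc (length s)"
  by (cases p) (simp add: insert_point.simps)

lemma nth_insert_point:
  "p < Suc (length s) \<Longrightarrow>
    insert_point s (a, b) ! p = (if p = a then b + 1 else shift b (s ! unshift a p - 1) + 1)"
  by (simp add: insert_point.simps del: upt_Suc)

lemma is_perm_nth_shift:
  assumes s: "is_perm s" and a: "a < length s" and sa: "s ! a = b + 1" and j: "j < length s - 1"
  shows "shift a j < length s" and "s ! shift a j - 1 \<noteq> b"
    and "1 \<le> s ! shift a j" and "s ! shift a j \<le> length s"
proof -
  show l: "shift a j < length s" using shift_less_Suc[of j "length s - 1" a] j by simp
  have "s ! shift a j \<noteq> s ! a" using is_perm_nth_eq_iff[OF s l a] by simp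
  then show "s ! shift a j - 1 \<noteq> b" "1 \<le> s ! shift a j" "s ! shift a j \<le> length s"
    using sa is_perm_nth_bounds[OF s l] by auto
qed

lemma is_perm_delete_point:
  assumes s: "is_perm s" and a: "a < length s" and sa: "s ! a = b + 1"
  shows "is_perm (delete_point s (a, b))"
proof (rule is_permI)
  note bounds = is_perm_nth_shift[OF s a sa]
  show "distinct (delete_point s (a, b))"
  proof (subst distinct_conv_nth, intro allI impI)
    fix i j assume i: "i < length (delete_point s (a, b))" and j: "j < length (delete_point s (a, b))"
      and "i \<noteq> j"
    then have "s ! shift a i \<noteq> s ! shift a j"
      using is_perm_nth_eq_iff[OF s, of "shift a i" "shift a j"] bounds(1) by simp
    then have "s ! shift a i - 1 \<noteq> s ! shift a j - 1" using bounds(3)[of i] bounds(3)[of j] i j by simp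
    then show "delete_point s (a, b) ! i \<noteq> delete_point s (a, b) ! j"
      using i j bounds(2) unshift_eq_iff by simp
  qed
  have "b < length s" using is_perm_nth_bounds[OF s a] sa by simp
  then show "1 \<le> delete_point s (a, b) ! j \<and> delete_point s (a, b) ! j \<le> length (delete_point s (a, b))"
    if "j < length (delete_point s (a, b))" for j
    using that bounds[of j] by (auto simp: unshift_def)
qed

lemma is_perm_insert_point:
  assumes s: "is_perm s" and a: "a \<le> length s" and b: "b \<le> length s"
  shows "is_perm (insert_point s (a, b))"
proof (rule is_permI)
  have bounds: "unshift a q < length s" "1 \<le> s ! unshift a q" "s ! unshift a q \<le> length s"
    if "q < Suc (length s)" "q \<noteq> a" for q
    using unshift_less[OF that] a is_perm_nth_bounds[OF s] by auto
  show "distinct (insert_point s (a, b))"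
  proof (subst distinct_conv_nth, intro allI impI)
    fix i j assume i: "i < length (insert_point s (a, b))" and j: "j < length (insert_point s (a, b))"
      and ij: "i \<noteq> j"
    show "insert_point s (a, b) ! i \<noteq> insert_point s (a, b) ! j"
    proof (cases "i = a \<or> j = a")
      case True
      then show ?thesis using i j ij nth_insert_point[of i s a b] nth_insert_point[of j s a b] by auto
    next
      case False
      then have "s ! unshift a i \<noteq> s ! unshift a j"
        using i j ij bounds is_perm_nth_eq_iff[OF s] unshift_eq_iff by simp
      then have "s ! unshift a i - 1 \<noteq> s ! unshift a j - 1"
        using i j False bounds(2)[of i] bounds(2)[of j] by simp
      then show ?thesis using False i j nth_insert_point[of i s a b] nth_insert_point[of j s a b] by simp
    qed
  qed
  show "1 \<le> insert_point s (a, b) ! q \<and> insert_point s (a, b) ! q \<le> length (insert_point s (a, b))"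
    if "q < length (insert_point s (a, b))" for q
    using that b bounds[of q] nth_insert_point[of q s a b] unfolding shift_def by auto
qed

lemma nth_insert_point_self: "a \<le> length s \<Longrightarrow> insert_point s (a, b) ! a = b + 1"
  using nth_insert_point[of a s a b] by simp

lemma delete_insert_point:
  assumes s: "is_perm s" and a: "a \<le> length s"
  shows "delete_point (insert_point s (a, b)) (a, b) = s"
proof (rule nth_equalityI)
  fix j assume "j < length (delete_point (insert_point s (a, b)) (a, b))"
  then have j: "j < length s" by simp
  then have "insert_point s (a, b) ! shift a j = shift b (s ! j - 1) + 1"
    using nth_insert_point[OF shift_less_Suc[OF j]] by simp
  moreover have "1 \<le> s ! j" using is_perm_nth_bounds[OF s j] by simp
  ultimately show "delete_point (insert_point s (a, b)) (a, b) ! j = s ! j"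
    using nth_delete_point[of j "insert_point s (a, b)" a b] j by simp
qed simp

lemma insert_delete_point:
  assumes s: "is_perm s" and a: "a < length s" and sa: "s ! a = b + 1"
  shows "insert_point (delete_point s (a, b)) (a, b) = s"
proof (rule nth_equalityI)
  show "length (insert_point (delete_point s (a, b)) (a, b)) = length s" using a by simp
  fix q assume "q < length (insert_point (delete_point s (a, b)) (a, b))"
  then have q: "q < length s" using a by simp
  show "insert_point (delete_point s (a, b)) (a, b) ! q = s ! q"
  proof (cases "q = a")
    case True
    then show ?thesis using q sa nth_insert_point[of q "delete_point s (a, b)" a b] a by simp
  next
    case False
    have u: "unshift a q < length s - 1" using unshift_less[of q "length s - 1" a] q a False by simp
    have sq: "shift a (unshift a q) = q" using shift_unshift False by simp
    have q_row: "s ! q - 1 \<noteq> b" "1 \<le> s ! q" using is_perm_nth_shift[OF s a sa u] sq by auto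
    have "insert_point (delete_point s (a, b)) (a, b) ! q
        = shift b (delete_point s (a, b) ! unshift a q - 1) + 1"
      using q a False nth_insert_point[of q "delete_point s (a, b)" a b] by simp
    also have "\<dots> = shift b (unshift b (s ! q - 1)) + 1" using nth_delete_point[OF u] sq by simp
    also have "\<dots> = s ! q" using shift_unshift[OF q_row(1)] q_row(2) by simp
    finally show ?thesis .
  qed
qed

lemma pattern_embedding_from_delete_point:
  assumes s: "is_perm s" and a: "a < length s" and sa: "s ! a = b + 1"
    and e: "pattern_embedding t (delete_point s (a, b)) r c"
  shows "pattern_embedding t s (shift b \<circ> r) (shift a \<circ> c)"
  unfolding pattern_embedding_def
proof (intro conjI allI impI)
  note bounds = pattern_embedding_bounds[OF e, simplified]
  have len: "Suc (length s - 1) = length s" using a by simp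
  show "strict_mono_on {..<length t} (shift b \<circ> r)" "strict_mono_on {..<length t} (shift a \<circ> c)"
    using e unfolding pattern_embedding_def strict_mono_on_def by auto
  show "(shift b \<circ> r) ` {..<length t} \<subseteq> {..<length s}" "(shift a \<circ> c) ` {..<length t} \<subseteq> {..<length s}"
    using bounds shift_less_Suc[of _ "length s - 1"] unfolding len by auto
  fix i j assume i: "i < length t" and j: "j < length t"
  have "c j < length s - 1" using bounds[OF j] by simp
  note c_row = is_perm_nth_shift[OF s a sa this]
  have "(i + 1 = t ! j) \<longleftrightarrow> (r i + 1 = delete_point s (a, b) ! c j)"
    using pattern_embedding_entries[OF e i j] .
  also have "\<dots> \<longleftrightarrow> r i = unshift b (s ! shift a (c j) - 1)"
    using bounds[OF j] by simp
  also have "\<dots> \<longleftrightarrow> shift b (r i) = s ! shift a (c j) - 1"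
    by (rule eq_unshift_iff[OF c_row(2)])
  also have "\<dots> \<longleftrightarrow> shift b (r i) + 1 = s ! shift a (c j)"
    using c_row(3) by arith
  finally show "(i + 1 = t ! j) \<longleftrightarrow> ((shift b \<circ> r) i + 1 = s ! (shift a \<circ> c) j)" by simp
qed

lemma pattern_embedding_to_delete_point:
  assumes s: "is_perm s" and a: "a < length s" and sa: "s ! a = b + 1"
    and e: "pattern_embedding t s r c"
    and ac: "a \<notin> c ` {..<length t}" and br: "b \<notin> r ` {..<length t}"
  shows "pattern_embedding t (delete_point s (a, b)) (unshift b \<circ> r) (unshift a \<circ> c)"
  unfolding pattern_embedding_def
proof (intro conjI allI impI)
  have b: "b < length s" using is_perm_nth_bounds[OF s a] sa by simp
  have len: "Suc (length s - 1) = length s" using a by simp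
  have rb: "r i \<noteq> b" and ca: "c i \<noteq> a" if "i < length t" for i using that ac br by auto
  note bounds = pattern_embedding_bounds[OF e]
  have c_less: "unshift a (c j) < length s - 1" if "j < length t" for j
    using bounds[OF that] ca[OF that] unshift_less[of _ "length s - 1" a] a unfolding len by simp
  show "strict_mono_on {..<length t} (unshift b \<circ> r)" "strict_mono_on {..<length t} (unshift a \<circ> c)"
    using e rb ca unshift_less_iff unfolding pattern_embedding_def strict_mono_on_def by auto
  show "(unshift b \<circ> r) ` {..<length t} \<subseteq> {..<length (delete_point s (a, b))}"
    using bounds rb unshift_less[of _ "length s - 1" b] b unfolding len by auto
  show "(unshift a \<circ> c) ` {..<length t} \<subseteq> {..<length (delete_point s (a, b))}"
    using c_less by auto
  fix i j assume i: "i < length t" and j: "j < length t"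
  have sh: "shift a (unshift a (c j)) = c j" using shift_unshift ca[OF j] by simp
  have c_row: "s ! c j - 1 \<noteq> b" "1 \<le> s ! c j"
    using is_perm_nth_shift[OF s a sa c_less[OF j]] sh by auto
  have "(i + 1 = t ! j) \<longleftrightarrow> (r i + 1 = s ! c j)" using pattern_embedding_entries[OF e i j] .
  also have "\<dots> \<longleftrightarrow> r i = s ! c j - 1" using c_row(2) by arith
  also have "\<dots> \<longleftrightarrow> unshift b (r i) = unshift b (s ! c j - 1)"
    by (rule unshift_eq_iff[OF rb[OF i] c_row(1), symmetric])
  also have "\<dots> \<longleftrightarrow> unshift b (r i) + 1 = delete_point s (a, b) ! unshift a (c j)"
    using nth_delete_point[OF c_less[OF j]] sh by simp
  finally show "(i + 1 = t ! j) \<longleftrightarrow> ((unshift b \<circ> r) i + 1 = delete_point s (a, b) ! (unshift a \<circ> c) j)"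
    by simp
qed

lemma pattern_delete_point_iff:
  assumes t: "is_perm t" and s: "is_perm s" and a: "a < length s" and sa: "s ! a = b + 1"
  shows "pattern t (delete_point s (a, b)) \<longleftrightarrow>
    (\<exists>r c. pattern_embedding t s r c \<and> b \<notin> r ` {..<length t})"
proof
  assume "pattern t (delete_point s (a, b))"
  then obtain r c where "pattern_embedding t (delete_point s (a, b)) r c"
    unfolding pattern_iff_embedding by blast
  then have "pattern_embedding t s (shift b \<circ> r) (shift a \<circ> c)"
    by (rule pattern_embedding_from_delete_point[OF s a sa])
  moreover have "b \<notin> (shift b \<circ> r) ` {..<length t}" by auto
  ultimately show "\<exists>r c. pattern_embedding t s r c \<and> b \<notin> r ` {..<length t}" by blast
next
  assume "\<exists>r c. pattern_embedding t s r c \<and> b \<notin> r ` {..<length t}"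
  then obtain r c where e: "pattern_embedding t s r c" and br: "b \<notin> r ` {..<length t}" by blast
  then have "a \<notin> c ` {..<length t}"
    using pattern_embedding_avoids_column_iff_row[OF e t s a sa] by blast
  then have "pattern_embedding t (delete_point s (a, b)) (unshift b \<circ> r) (unshift a \<circ> c)"
    by (rule pattern_embedding_to_delete_point[OF s a sa e _ br])
  then show "pattern t (delete_point s (a, b))"
    using t is_perm_delete_point[OF s a sa] unfolding pattern_iff_embedding by blast
qed

section \<open>Padded permutation matrices\<close>

lemma strict_mono_on_lessThan_fun_upd:
  assumes "strict_mono_on {..<k} r" and "\<And>i. i < k \<Longrightarrow> r i < m"
  shows "strict_mono_on {..<Suc k} (r(k := m))"
  using assms by (auto simp: strict_mono_on_def)

lemma strict_mono_on_lessThan_case_nat: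
  assumes "strict_mono_on {..<k} r" and "\<And>i. i < k \<Longrightarrow> 0 < r i"
  shows "strict_mono_on {..<Suc k} (case_nat 0 r)"
  using assms by (auto simp: strict_mono_on_def split: nat.split)

lemma strict_mono_on_lessThan_Suc_comp_Suc:
  "strict_mono_on {..<Suc k} R \<Longrightarrow> strict_mono_on {..<k} (R \<circ> Suc)"
  by (auto simp: strict_mono_on_def)

lemma submatrix_perm_mat_iff:
  "submatrix M (perm_mat s) \<longleftrightarrow>
    (\<exists>r c. strict_mono_on {..<nrows M} r \<and> strict_mono_on {..<ncols M} c \<and>
       r ` {..<nrows M} \<subseteq> {..<length s} \<and> c ` {..<ncols M} \<subseteq> {..<length s} \<and>
       (\<forall>i<nrows M. \<forall>j<ncols M. entry M i j \<longleftrightarrow> r i + 1 = s ! c j))"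
  unfolding submatrix_def perm_mat_def nrows_def ncols_def entry_def by simp

lemma bmat_sel [simp]: "nrows (m, n, f) = m" "ncols (m, n, f) = n" "entry (m, n, f) = f"
  by (simp_all add: nrows_def ncols_def entry_def)

lemma entry_perm_mat [simp]: "entry (perm_mat t) i j \<longleftrightarrow> i + 1 = t ! j"
  by (simp add: perm_mat_def)

lemma submatrix_ext_mat_Top_iff:
  assumes t: "is_perm t" and s: "length s = Suc n"
  shows "submatrix (ext_mat t Top) (perm_mat s) \<longleftrightarrow>
    (\<exists>r c. pattern_embedding t s r c \<and> n \<notin> r ` {..<length t})"
proof
  assume "submatrix (ext_mat t Top) (perm_mat s)"
  then obtain R c where R: "strict_mono_on {..<Suc (length t)} R" "R ` {..<Suc (length t)} \<subseteq> {..<length s}"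
    and c: "strict_mono_on {..<length t} c" "c ` {..<length t} \<subseteq> {..<length s}"
    and entries: "\<forall>i<Suc (length t). \<forall>j<length t. (i < length t \<and> i + 1 = t ! j) \<longleftrightarrow> R i + 1 = s ! c j"
    unfolding submatrix_perm_mat_iff by auto
  have "(i + 1 = t ! j) \<longleftrightarrow> R i + 1 = s ! c j" if "i < length t" "j < length t" for i j
    using entries[rule_format, of i j] that by simp
  then have "pattern_embedding t s R c"
    unfolding pattern_embedding_def
    using monotone_on_subset[OF R(1)] R(2) c by (auto simp: image_subset_iff)
  moreover have "R i \<noteq> n" if "i < length t" for i
    using strict_mono_onD[OF R(1), of i "length t"] R(2) s that by auto
  then have "n \<notin> R ` {..<length t}" by auto
  ultimately show "\<exists>r c. pattern_embedding t s r c \<and> n \<notin> r ` {..<length t}" by blast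
next
  assume "\<exists>r c. pattern_embedding t s r c \<and> n \<notin> r ` {..<length t}"
  then obtain r c where e: "pattern_embedding t s r c" and n: "n \<notin> r ` {..<length t}" by blast
  txt \<open>The zero row goes to the free top row \<open>n\<close> of \<open>s\<close>; it meets the columns \<open>c j\<close> only in
    zeros because their points lie in the rows \<open>r i < n\<close>.\<close>
  have r_less: "r i < n" if "i < length t" for i
    using pattern_embedding_bounds[OF e that] n that s by (metis image_eqI lessThan_iff less_SucE)
  have "(i < length t \<and> i + 1 = t ! j) \<longleftrightarrow> (r(length t := n)) i + 1 = s ! c j"
    if "i < Suc (length t)" "j < length t" for i j
  proof (cases "i < length t")
    case False
    have "s ! c j = r (t ! j - 1) + 1" "t ! j - 1 < length t"
      using pattern_embedding_nth[OF e t that(2)] is_perm_nth_bounds[OF t that(2)] by auto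
    then show ?thesis using False that r_less by fastforce
  qed (use pattern_embedding_entries[OF e _ that(2)] in auto)
  moreover have "strict_mono_on {..<Suc (length t)} (r(length t := n))"
    using e r_less unfolding pattern_embedding_def by (simp add: strict_mono_on_lessThan_fun_upd)
  moreover have "(r(length t := n)) ` {..<Suc (length t)} \<subseteq> {..<length s}"
    using r_less s by (auto simp: less_Suc_eq)
  ultimately show "submatrix (ext_mat t Top) (perm_mat s)"
    using e unfolding submatrix_perm_mat_iff pattern_embedding_def
    by (intro exI[of _ "r(length t := n)"] exI[of _ c]) simp
qed

lemma submatrix_ext_mat_Bottom_iff:
  assumes t: "is_perm t" and s: "0 < length s"
  shows "submatrix (ext_mat t Bottom) (perm_mat s) \<longleftrightarrow>
    (\<exists>r c. pattern_embedding t s r c \<and> 0 \<notin> r ` {..<length t})"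
proof
  assume "submatrix (ext_mat t Bottom) (perm_mat s)"
  then obtain R c where R: "strict_mono_on {..<Suc (length t)} R" "R ` {..<Suc (length t)} \<subseteq> {..<length s}"
    and c: "strict_mono_on {..<length t} c" "c ` {..<length t} \<subseteq> {..<length s}"
    and entries: "\<forall>i<Suc (length t). \<forall>j<length t. (0 < i \<and> i - 1 + 1 = t ! j) \<longleftrightarrow> R i + 1 = s ! c j"
    unfolding submatrix_perm_mat_iff by auto
  have "(i + 1 = t ! j) \<longleftrightarrow> R (Suc i) + 1 = s ! c j" if "i < length t" "j < length t" for i j
    using entries[rule_format, of "Suc i" j] that by simp
  then have "pattern_embedding t s (R \<circ> Suc) c"
    unfolding pattern_embedding_def
    using strict_mono_on_lessThan_Suc_comp_Suc[OF R(1)] R(2) c by (auto simp: image_subset_iff)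
  moreover have "R (Suc i) \<noteq> 0" if "i < length t" for i
    using strict_mono_onD[OF R(1), of 0 "Suc i"] that by auto
  then have "0 \<notin> (R \<circ> Suc) ` {..<length t}" by fastforce
  ultimately show "\<exists>r c. pattern_embedding t s r c \<and> 0 \<notin> r ` {..<length t}" by blast
next
  assume "\<exists>r c. pattern_embedding t s r c \<and> 0 \<notin> r ` {..<length t}"
  then obtain r c where e: "pattern_embedding t s r c" and z: "0 \<notin> r ` {..<length t}" by blast
  have r_pos: "0 < r i" if "i < length t" for i
    using z that by (metis image_eqI lessThan_iff gr0I)
  have "(0 < i \<and> i - 1 + 1 = t ! j) \<longleftrightarrow> case_nat 0 r i + 1 = s ! c j"
    if "i < Suc (length t)" "j < length t" for i j
  proof (cases i)
    case 0
    have "s ! c j = r (t ! j - 1) + 1" "t ! j - 1 < length t"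
      using pattern_embedding_nth[OF e t that(2)] is_perm_nth_bounds[OF t that(2)] by auto
    then show ?thesis using 0 r_pos by fastforce
  qed (use pattern_embedding_entries[OF e _ that(2)] that in auto)
  moreover have "strict_mono_on {..<Suc (length t)} (case_nat 0 r)"
    using e r_pos unfolding pattern_embedding_def by (simp add: strict_mono_on_lessThan_case_nat)
  moreover have "case_nat 0 r ` {..<Suc (length t)} \<subseteq> {..<length s}"
    using pattern_embedding_bounds[OF e] s by (auto simp: less_Suc_eq_0_disj)
  ultimately show "submatrix (ext_mat t Bottom) (perm_mat s)"
    using e unfolding submatrix_perm_mat_iff pattern_embedding_def
    by (intro exI[of _ "case_nat 0 r"] exI[of _ c]) simp
qed

lemma submatrix_ext_mat_Right_iff:
  assumes t: "is_perm t" and s: "is_perm s" "length s = Suc n"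
  shows "submatrix (ext_mat t Right) (perm_mat s) \<longleftrightarrow>
    (\<exists>r c. pattern_embedding t s r c \<and> n \<notin> c ` {..<length t})"
proof
  assume "submatrix (ext_mat t Right) (perm_mat s)"
  then obtain r C where r: "strict_mono_on {..<length t} r" "r ` {..<length t} \<subseteq> {..<length s}"
    and C: "strict_mono_on {..<Suc (length t)} C" "C ` {..<Suc (length t)} \<subseteq> {..<length s}"
    and entries: "\<forall>i<length t. \<forall>j<Suc (length t). (j < length t \<and> i + 1 = t ! j) \<longleftrightarrow> r i + 1 = s ! C j"
    unfolding submatrix_perm_mat_iff by auto
  have "(i + 1 = t ! j) \<longleftrightarrow> r i + 1 = s ! C j" if "i < length t" "j < length t" for i j
    using entries[rule_format, of i j] that by simp
  then have "pattern_embedding t s r C"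
    unfolding pattern_embedding_def
    using monotone_on_subset[OF C(1)] C(2) r by (auto simp: image_subset_iff)
  moreover have "C j \<noteq> n" if "j < length t" for j
    using strict_mono_onD[OF C(1), of j "length t"] C(2) s that by auto
  then have "n \<notin> C ` {..<length t}" by auto
  ultimately show "\<exists>r c. pattern_embedding t s r c \<and> n \<notin> c ` {..<length t}" by blast
next
  assume "\<exists>r c. pattern_embedding t s r c \<and> n \<notin> c ` {..<length t}"
  then obtain r c where e: "pattern_embedding t s r c" and n: "n \<notin> c ` {..<length t}" by blast
  have c_less: "c j < n" if "j < length t" for j
    using pattern_embedding_bounds[OF e that] n that s by (metis image_eqI lessThan_iff less_SucE)
  have sn: "n < length s" "s ! n = (s ! n - 1) + 1" using is_perm_nth_bounds[OF s(1), of n] s by auto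
  have "(j < length t \<and> i + 1 = t ! j) \<longleftrightarrow> r i + 1 = s ! (c(length t := n)) j"
    if "i < length t" "j < Suc (length t)" for i j
  proof (cases "j < length t")
    case False
    have "s ! n - 1 \<notin> r ` {..<length t}"
      using pattern_embedding_avoids_column_iff_row[OF e t s(1) sn] n by blast
    then show ?thesis using False that sn(2) by force
  qed (use pattern_embedding_entries[OF e that(1)] in auto)
  moreover have "strict_mono_on {..<Suc (length t)} (c(length t := n))"
    using e c_less unfolding pattern_embedding_def by (simp add: strict_mono_on_lessThan_fun_upd)
  moreover have "(c(length t := n)) ` {..<Suc (length t)} \<subseteq> {..<length s}"
    using c_less s by (auto simp: less_Suc_eq)
  ultimately show "submatrix (ext_mat t Right) (perm_mat s)"
    using e unfolding submatrix_perm_mat_iff pattern_embedding_def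
    by (intro exI[of _ r] exI[of _ "c(length t := n)"]) simp
qed

lemma submatrix_ext_mat_Left_iff:
  assumes t: "is_perm t" and s: "is_perm s" "0 < length s"
  shows "submatrix (ext_mat t Left) (perm_mat s) \<longleftrightarrow>
    (\<exists>r c. pattern_embedding t s r c \<and> 0 \<notin> c ` {..<length t})"
proof
  assume "submatrix (ext_mat t Left) (perm_mat s)"
  then obtain r C where r: "strict_mono_on {..<length t} r" "r ` {..<length t} \<subseteq> {..<length s}"
    and C: "strict_mono_on {..<Suc (length t)} C" "C ` {..<Suc (length t)} \<subseteq> {..<length s}"
    and entries: "\<forall>i<length t. \<forall>j<Suc (length t). (0 < j \<and> i + 1 = t ! (j - 1)) \<longleftrightarrow> r i + 1 = s ! C j"
    unfolding submatrix_perm_mat_iff by auto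
  have "(i + 1 = t ! j) \<longleftrightarrow> r i + 1 = s ! C (Suc j)" if "i < length t" "j < length t" for i j
    using entries[rule_format, of i "Suc j"] that by simp
  then have "pattern_embedding t s r (C \<circ> Suc)"
    unfolding pattern_embedding_def
    using strict_mono_on_lessThan_Suc_comp_Suc[OF C(1)] C(2) r by (auto simp: image_subset_iff)
  moreover have "C (Suc j) \<noteq> 0" if "j < length t" for j
    using strict_mono_onD[OF C(1), of 0 "Suc j"] that by auto
  then have "0 \<notin> (C \<circ> Suc) ` {..<length t}" by fastforce
  ultimately show "\<exists>r c. pattern_embedding t s r c \<and> 0 \<notin> c ` {..<length t}" by blast
next
  assume "\<exists>r c. pattern_embedding t s r c \<and> 0 \<notin> c ` {..<length t}"
  then obtain r c where e: "pattern_embedding t s r c" and z: "0 \<notin> c ` {..<length t}" by blast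
  have c_pos: "0 < c j" if "j < length t" for j
    using z that by (metis image_eqI lessThan_iff gr0I)
  have s0: "s ! 0 = (s ! 0 - 1) + 1" using is_perm_nth_bounds[OF s(1) s(2)] by auto
  have "(0 < j \<and> i + 1 = t ! (j - 1)) \<longleftrightarrow> r i + 1 = s ! case_nat 0 c j"
    if "i < length t" "j < Suc (length t)" for i j
  proof (cases j)
    case 0
    have "s ! 0 - 1 \<notin> r ` {..<length t}"
      using pattern_embedding_avoids_column_iff_row[OF e t s(1) s(2) s0] z by blast
    then show ?thesis using 0 that s0 by force
  qed (use pattern_embedding_entries[OF e that(1)] that in auto)
  moreover have "strict_mono_on {..<Suc (length t)} (case_nat 0 c)"
    using e c_pos unfolding pattern_embedding_def by (simp add: strict_mono_on_lessThan_case_nat)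
  moreover have "case_nat 0 c ` {..<Suc (length t)} \<subseteq> {..<length s}"
    using pattern_embedding_bounds[OF e] s(2) by (auto simp: less_Suc_eq_0_disj)
  ultimately show "submatrix (ext_mat t Left) (perm_mat s)"
    using e unfolding submatrix_perm_mat_iff pattern_embedding_def
    by (intro exI[of _ r] exI[of _ "case_nat 0 c"]) simp
qed

section \<open>Counting the padded classes\<close>

text \<open>Cells are pairs \<open>(column, row)\<close>; \<open>side_cells x n\<close> is side \<open>x\<close> of the
  \<open>(n + 1) \<times> (n + 1)\<close> grid.\<close>
fun side_cells :: "side \<Rightarrow> nat \<Rightarrow> (nat \<times> nat) set" where
  "side_cells Top n = (\<lambda>a. (a, n)) ` {..n}"
| "side_cells Bottom n = (\<lambda>a. (a, 0)) ` {..n}"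
| "side_cells Right n = (\<lambda>b. (n, b)) ` {..n}"
| "side_cells Left n = (\<lambda>b. (0, b)) ` {..n}"

definition side_point :: "side \<Rightarrow> nat list \<Rightarrow> nat \<times> nat" where
  "side_point x s = (THE p. p \<in> side_cells x (length s - 1) \<and> s ! fst p = snd p + 1)"

lemma card_side_cells: "card (side_cells x n) = Suc n"
  by (cases x) (simp_all add: card_image inj_on_def)

lemma side_cells_le: "p \<in> side_cells x n \<Longrightarrow> fst p \<le> n \<and> snd p \<le> n"
  by (cases x) auto

lemma side_cells_ex1_point:
  assumes s: "is_perm s" "length s = Suc n"
  shows "\<exists>!p. p \<in> side_cells x n \<and> s ! fst p = snd p + 1"
proof (rule ex_ex1I)
  show "\<exists>p. p \<in> side_cells x n \<and> s ! fst p = snd p + 1"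
  proof (cases x)
    case Top
    obtain a where "a < length s" "s ! a = n + 1" using is_perm_value_index[OF s(1), of n] s(2) by auto
    then show ?thesis using Top s(2) by (intro exI[of _ "(a, n)"]) auto
  next
    case Bottom
    obtain a where "a < length s" "s ! a = 0 + 1" using is_perm_value_index[OF s(1), of 0] s(2) by auto
    then show ?thesis using Bottom s(2) by (intro exI[of _ "(a, 0)"]) auto
  next
    case Right
    then show ?thesis using is_perm_nth_bounds[OF s(1), of n] s(2)
      by (intro exI[of _ "(n, s ! n - 1)"]) auto
  next
    case Left
    then show ?thesis using is_perm_nth_bounds[OF s(1), of 0] s(2)
      by (intro exI[of _ "(0, s ! 0 - 1)"]) auto
  qed
next
  fix p q assume p: "p \<in> side_cells x n \<and> s ! fst p = snd p + 1"
    and q: "q \<in> side_cells x n \<and> s ! fst q = snd q + 1"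
  have "fst p < length s" "fst q < length s" using p q side_cells_le s(2) by fastforce+
  then have "s ! fst p = s ! fst q \<Longrightarrow> fst p = fst q" using is_perm_nth_eq_iff[OF s(1)] by blast
  then show "p = q" using p q by (cases x) auto
qed

lemma side_point_spec:
  assumes "is_perm s" "length s = Suc n"
  shows "side_point x s \<in> side_cells x n" and "fst (side_point x s) < length s"
    and "s ! fst (side_point x s) = snd (side_point x s) + 1"
proof -
  have "side_point x s \<in> side_cells x n \<and> s ! fst (side_point x s) = snd (side_point x s) + 1"
    using theI'[OF side_cells_ex1_point[OF assms, of x]] assms(2) unfolding side_point_def by simp
  then show "side_point x s \<in> side_cells x n" "s ! fst (side_point x s) = snd (side_point x s) + 1"
    "fst (side_point x s) < length s"
    using side_cells_le assms(2) by fastforce+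
qed

lemma side_point_eq:
  assumes "is_perm s" "length s = Suc n" "p \<in> side_cells x n" "s ! fst p = snd p + 1"
  shows "side_point x s = p"
  using the1_equality[OF side_cells_ex1_point[OF assms(1,2), of x]] assms unfolding side_point_def
  by simp

lemma submatrix_ext_mat_iff_pattern_delete_side_point:
  assumes t: "is_perm t" and s: "is_perm s" "length s = Suc n"
  shows "submatrix (ext_mat t x) (perm_mat s) \<longleftrightarrow> pattern t (delete_point s (side_point x s))"
proof -
  obtain a b where ab: "side_point x s = (a, b)" by fastforce
  have a: "a < length s" and sa: "s ! a = b + 1" and cell: "(a, b) \<in> side_cells x n"
    using side_point_spec[OF s, of x] ab by auto
  have nonempty: "0 < length s" using s(2) by simp
  note column_iff_row = pattern_embedding_avoids_column_iff_row[OF _ t s(1) a sa]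
  have "submatrix (ext_mat t x) (perm_mat s) \<longleftrightarrow>
      (\<exists>r c. pattern_embedding t s r c \<and> b \<notin> r ` {..<length t})"
  proof (cases x)
    case Top
    then show ?thesis using cell submatrix_ext_mat_Top_iff[OF t s(2)] by auto
  next
    case Bottom
    then show ?thesis using cell submatrix_ext_mat_Bottom_iff[OF t nonempty] by auto
  next
    case Right
    with cell have "a = n" by auto
    with column_iff_row show ?thesis unfolding Right submatrix_ext_mat_Right_iff[OF t s] by blast
  next
    case Left
    with cell have "a = 0" by auto
    with column_iff_row show ?thesis unfolding Left submatrix_ext_mat_Left_iff[OF t s(1) nonempty] by blast
  qed
  then show ?thesis using pattern_delete_point_iff[OF t s(1) a sa] ab by simp
qed

lemma mem_Av_mat_ext_set_iff:
  assumes C: "perm_class C" and s: "is_perm s" "length s = Suc n"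
  shows "s \<in> Av_mat (ext_set (p_basis C) x) \<longleftrightarrow> delete_point s (side_point x s) \<in> C"
proof -
  have "is_perm (delete_point s (side_point x s))"
    using is_perm_delete_point[OF s(1)] side_point_spec[OF s, of x] by (metis prod.collapse)
  moreover have "s \<in> Av_mat (ext_set (p_basis C) x) \<longleftrightarrow>
      (\<forall>t\<in>p_basis C. \<not> pattern t (delete_point s (side_point x s)))"
    using s submatrix_ext_mat_iff_pattern_delete_side_point[OF _ s]
    unfolding Av_mat_def ext_set_def p_basis_def by auto
  ultimately show ?thesis using perm_class_mem_iff[OF C] by blast
qed

lemma side_point_insert_point:
  assumes s: "is_perm s" and p: "p \<in> side_cells x (length s)"
  shows "is_perm (insert_point s p)" and "side_point x (insert_point s p) = p"
proof -
  obtain a b where ab: "p = (a, b)" by fastforce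
  have le: "a \<le> length s" "b \<le> length s" using side_cells_le p ab by auto
  show perm: "is_perm (insert_point s p)" using is_perm_insert_point[OF s le] ab by simp
  show "side_point x (insert_point s p) = p"
    using side_point_eq[OF perm _ p] nth_insert_point_self[OF le(1)] ab by simp
qed

lemma bij_betw_delete_side_point:
  assumes C: "perm_class C"
  shows "bij_betw (\<lambda>s. (side_point x s, delete_point s (side_point x s)))
    {s \<in> Av_mat (ext_set (p_basis C) x). length s = Suc n} (side_cells x n \<times> {s \<in> C. length s = n})"
proof (rule bij_betw_byWitness[where f' = "\<lambda>(p, s). insert_point s p"])
  have in_C: "is_perm s" if "s \<in> C" for s using C that unfolding perm_class_def by auto
  have in_Av: "is_perm s" if "s \<in> Av_mat B" for B s using that unfolding Av_mat_def by auto
  have delete: "side_point x s \<in> side_cells x n \<and> delete_point s (side_point x s) \<in> C \<and>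
      insert_point (delete_point s (side_point x s)) (side_point x s) = s"
    if "s \<in> Av_mat (ext_set (p_basis C) x)" "length s = Suc n" for s
    using side_point_spec[OF in_Av[OF that(1)] that(2), of x] insert_delete_point[OF in_Av[OF that(1)]]
      mem_Av_mat_ext_set_iff[OF C in_Av[OF that(1)] that(2)] that(1)
    by (metis prod.collapse)
  have insert: "insert_point s p \<in> Av_mat (ext_set (p_basis C) x) \<and>
      side_point x (insert_point s p) = p \<and> delete_point (insert_point s p) p = s"
    if "p \<in> side_cells x n" "s \<in> C" "length s = n" for p s
    using side_point_insert_point[OF in_C[OF that(2)], of p x] delete_insert_point[OF in_C[OF that(2)]]
      side_cells_le[OF that(1)] mem_Av_mat_ext_set_iff[OF C, of "insert_point s p" n x] that
    by (cases p) auto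
  show "\<forall>s\<in>{s \<in> Av_mat (ext_set (p_basis C) x). length s = Suc n}.
      (\<lambda>(p, s). insert_point s p) (side_point x s, delete_point s (side_point x s)) = s"
    using delete by auto
  show "\<forall>y\<in>side_cells x n \<times> {s \<in> C. length s = n}.
      (\<lambda>s. (side_point x s, delete_point s (side_point x s))) ((\<lambda>(p, s). insert_point s p) y) = y"
    using insert by auto
  show "(\<lambda>s. (side_point x s, delete_point s (side_point x s))) `
      {s \<in> Av_mat (ext_set (p_basis C) x). length s = Suc n} \<subseteq> side_cells x n \<times> {s \<in> C. length s = n}"
    using delete by auto
  show "(\<lambda>(p, s). insert_point s p) ` (side_cells x n \<times> {s \<in> C. length s = n})
      \<subseteq> {s \<in> Av_mat (ext_set (p_basis C) x). length s = Suc n}"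
    using insert by auto
qed

lemma card_Av_mat_ext_set_Suc:
  assumes "perm_class C"
  shows "card {s \<in> Av_mat (ext_set (p_basis C) x). length s = Suc n} = Suc n * card {s \<in> C. length s = n}"
  using bij_betw_same_card[OF bij_betw_delete_side_point[OF assms]]
  by (simp add: card_cartesian_product card_side_cells)

lemma card_Av_mat_ext_set_0: "card {s \<in> Av_mat (ext_set B x). length s = 0} = 1"
proof -
  have "\<not> submatrix (ext_mat t x) (perm_mat [])" for t
    by (cases x) (auto simp: submatrix_perm_mat_iff)
  then have "{s \<in> Av_mat (ext_set B x). length s = 0} = {[]}"
    unfolding Av_mat_def ext_set_def is_perm_def by auto
  then show ?thesis by simp
qed

theorem corollary3:
  fixes C :: "nat \<Rightarrow> nat list set"
  assumes "perm_class (C 1)" and "perm_class (C 2)"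
    and "wilf_equiv (C 1) (C 2)"
  shows "\<forall>i\<in>{1::nat, 2}. \<forall>j\<in>{1::nat, 2}. \<forall>x y.
           wilf_equiv (Av_mat (ext_set (p_basis (C i)) x)) (Av_mat (ext_set (p_basis (C j)) y))"
proof (intro ballI allI)
  fix i j :: nat and x y
  assume "i \<in> {1, 2}" "j \<in> {1, 2}"
  then have C: "perm_class (C i)" "perm_class (C j)"
    and sizes: "card {s \<in> C i. length s = m} = card {s \<in> C j. length s = m}" for m
    using assms by (auto simp: wilf_equiv_def)
  show "wilf_equiv (Av_mat (ext_set (p_basis (C i)) x)) (Av_mat (ext_set (p_basis (C j)) y))"
    unfolding wilf_equiv_def
  proof
    fix n
    show "card {s \<in> Av_mat (ext_set (p_basis (C i)) x). length s = n} =
        card {s \<in> Av_mat (ext_set (p_basis (C j)) y). length s = n}"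
    proof (cases n)
      case 0
      then show ?thesis by (simp only: card_Av_mat_ext_set_0)
    qed (simp add: card_Av_mat_ext_set_Suc C sizes)
  qed
qed

end
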